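(* Assume $\alpha\neq1$ and $\mu\neq0$. Take $c_k=1$ and $t_k=k$ for all $k\ge0$, and choose the constants $a_k$ recursively by $a_k=\exp(\mu_k)$ for $k\ge1$, where $\mu_k$ is the location parameter of $\log Z_k$ (which depends only on $a_1,\dots,a_{k-1}$). Then for every $k\ge1$, $Z_k\le Y_k$ almost surely and $\log Z_k\sim\mathcal S(\alpha,\beta,\sigma_k,\mu_k)$ with $$\mu_k=\mu+\log\frac{e^{\mu k}-1}{e^{\mu}-1},\qquad \sigma_k^\alpha=\sigma^\alpha\left(1+\sum_{j=1}^{k-1}\left(1-\frac{e^{\mu j}-1}{e^{\mu k}-1}\right)^\alpha\right).$$
   Context: Stable laws: for $\alpha^*\in(0,2]$, $\beta^*\in[-1,1]$, $\sigma^*>0$, $\mu^*\in\mathbb R$, write $Z\sim\mathcal S(\alpha^*,\beta^*,\sigma^*,\mu^* )$ if the real random variable $Z$ has characteristic function $\mathbb E e^{i\theta Z}=\exp\{i\theta\mu^*-|\sigma^*\theta|^{\alpha^*}(1-i\beta^*\operatorname{sgn}(\theta)\tan\frac{\pi\alpha^*}{2})\}$ when $\alpha^*\neq1$, and $\mathbb E e^{i\theta Z}=\exp\{i\theta\mu^*-|\sigma^*\theta|(1+i\beta^*\frac{2}{\pi}\operatorname{sgn}(\theta)\log|\theta|)\}$ when $\alpha^*=1$. Wealth process: on a probability space $(\Omega,\mathcal F,\mathbb P)$, $X:[0,\infty)\times\Omega\to(0,\infty)$ is a process such that $\log X$ is a Lévy process (càdlàg paths, independent increments) with, for all $0\le s<t$,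 $\log\frac{X(t)}{X(s)}\sim\mathcal S(\alpha,\beta,\sigma(t-s)^{1/\alpha},\mu(t-s))$, where $\alpha\in(0,2]$, $\beta\in[-1,1]$, $\sigma>0$, $\mu\in\mathbb R$ are fixed. Regular investing: given times $0=t_0<t_1<\cdots$ and amounts $c_k>0$ invested at $t_k$, set $X_k=X(t_k)/X(t_{k-1})$ for $k\ge1$, and define the terminal wealth recursively by $Y_1=c_0X_1$, $Y_k=X_k(Y_{k-1}+c_{k-1})$ for $k\ge2$. Lower bound process: given constants $a_{k}>0$ ($k\ge1$), set $b_{k}=\frac{a_{k}}{a_{k}+c_{k}}$, $Z_1=Y_1$, and $Z_k=X_k(a_{k-1}+c_{k-1})\left(\frac{Z_{k-1}}{a_{k-1}}\right)^{b_{k-1}}$ for $k\ge2$. *)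

theory Defs
  imports "HOL-Probability.Probability"
begin

definition stable_cf :: "real \<Rightarrow> real \<Rightarrow> real \<Rightarrow> real \<Rightarrow> real \<Rightarrow> complex" where
  "stable_cf \<alpha> \<beta> \<sigma> \<mu> \<theta> =
     (if \<alpha> \<noteq> 1 then
        exp (\<i> * complex_of_real (\<theta> * \<mu>)
             - complex_of_real (\<bar>\<sigma> * \<theta>\<bar> powr \<alpha>)
               * (1 - \<i> * complex_of_real (\<beta> * sgn \<theta> * tan (pi * \<alpha> / 2))))
      else
        exp (\<i> * complex_of_real (\<theta> * \<mu>)
             - complex_of_real \<bar>\<sigma> * \<theta>\<bar>
               * (1 + \<i> * complex_of_real (\<beta> * (2 / pi) * sgn \<theta> * ln \<bar>\<theta>\<bar>))))"

definition has_stable_law :: "'a measure \<Rightarrow> ('a \<Rightarrow> real) \<Rightarrow> real \<Rightarrow> real \<Rightarrow> real \<Rightarrow> real \<Rightarrow> bool" where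
  "has_stable_law M Z \<alpha> \<beta> \<sigma> \<mu> \<longleftrightarrow>
     Z \<in> borel_measurable M \<and>
     (\<forall>\<theta>. char (distr M borel Z) \<theta> = stable_cf \<alpha> \<beta> \<sigma> \<mu> \<theta>)"

definition stable_location :: "'a measure \<Rightarrow> ('a \<Rightarrow> real) \<Rightarrow> real" where
  "stable_location M Z = (THE \<mu>. \<exists>\<alpha> \<beta> \<sigma>. 0 < \<alpha> \<and> \<alpha> \<le> 2 \<and> -1 \<le> \<beta> \<and> \<beta> \<le> 1 \<and> 0 < \<sigma>
                               \<and> has_stable_law M Z \<alpha> \<beta> \<sigma> \<mu>)"

definition ret :: "(real \<Rightarrow> 'a \<Rightarrow> real) \<Rightarrow> (nat \<Rightarrow> real) \<Rightarrow> nat \<Rightarrow> 'a \<Rightarrow> real" where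
  "ret X t k \<omega> = X (t k) \<omega> / X (t (k - 1)) \<omega>"

text \<open>Terminal wealth Y_k (only meaningful for k >= 1).\<close>
fun Yw :: "(real \<Rightarrow> 'a \<Rightarrow> real) \<Rightarrow> (nat \<Rightarrow> real) \<Rightarrow> (nat \<Rightarrow> real) \<Rightarrow> nat \<Rightarrow> 'a \<Rightarrow> real" where
  "Yw X t c 0 \<omega> = 0"
| "Yw X t c (Suc 0) \<omega> = c 0 * ret X t 1 \<omega>"
| "Yw X t c (Suc (Suc k)) \<omega> = ret X t (Suc (Suc k)) \<omega> * (Yw X t c (Suc k) \<omega> + c (Suc k))"

text \<open>Lower bound process Z_k (only meaningful for k >= 1), with b_k = a_k / (a_k + c_k).\<close>
fun Zw :: "(real \<Rightarrow> 'a \<Rightarrow> real) \<Rightarrow> (nat \<Rightarrow> real) \<Rightarrow> (nat \<Rightarrow> real) \<Rightarrow> (nat \<Rightarrow> real) \<Rightarrow> nat \<Rightarrow> 'a \<Rightarrow> real" where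
  "Zw X t c a 0 \<omega> = 0"
| "Zw X t c a (Suc 0) \<omega> = Yw X t c (Suc 0) \<omega>"
| "Zw X t c a (Suc (Suc k)) \<omega> =
     ret X t (Suc (Suc k)) \<omega> * (a (Suc k) + c (Suc k))
       * (Zw X t c a (Suc k) \<omega> / a (Suc k)) powr (a (Suc k) / (a (Suc k) + c (Suc k)))"

end

theory Submission
  imports Defs
begin

text \<open>
  Let \<open>L j = log X(j+1) - log X(j)\<close> be the independent S(\<alpha>, \<beta>, \<sigma>, \<mu>) log-returns and
  \<open>b k = a k / (a k + 1)\<close>. Taking logarithms in the recursion for Z gives
  \<open>log Z(k+1) = L k + log (a k + 1) + b k * (log Z(k) - log (a k))\<close>, so by induction
  \<open>log Z(k)\<close> is an affine combination of \<open>L 0, ..., L (k-1)\<close> with positive weights. For \<alpha> \<noteq> 1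
  the characteristic function is multiplicative in \<open>(\<sigma>^\<alpha>, \<mu>)\<close>, so \<open>log Z(k)\<close> is stable with the
  same \<alpha> and \<beta>. With \<open>a k = exp \<mu>\<^sub>k\<close> the parameters obey \<open>\<mu>\<^sub>k\<^sub>+\<^sub>1 = \<mu> + log (exp \<mu>\<^sub>k + 1)\<close> and
  \<open>\<sigma>\<^sub>k\<^sub>+\<^sub>1^\<alpha> = \<sigma>^\<alpha> + (b k)^\<alpha> * \<sigma>\<^sub>k^\<alpha>\<close>, recursions with the stated closed-form solutions.
  The location \<open>\<mu>\<^sub>k\<close> is well defined because, for \<alpha> \<noteq> 1, the phase \<open>\<theta> \<mu> + c \<theta>^\<alpha>\<close> of the
  characteristic function determines \<mu>. Finally \<open>Z(k) \<le> Y(k)\<close> is weighted AM-GM in the form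
  \<open>(a + c) * (z/a) powr (a/(a+c)) \<le> z + c\<close>.
\<close>

lemma (in prob_space) char_distr_affine_sum:
  fixes L :: "nat \<Rightarrow> 'a \<Rightarrow> real"
  assumes ind: "indep_vars (\<lambda>_. borel) L {..<n}"
  shows "char (distr M borel (\<lambda>\<omega>. (\<Sum>j<n. w j * L j \<omega>) + C)) \<theta>
     = iexp (\<theta> * C) * (\<Prod>j<n. char (distr M borel (L j)) (w j * \<theta>))"
proof -
  have [measurable]: "\<And>j. j < n \<Longrightarrow> L j \<in> borel_measurable M"
    using ind unfolding indep_vars_def by auto
  have ind_scaled: "indep_vars (\<lambda>_. borel) (\<lambda>j \<omega>. w j * L j \<omega>) {..<n}"
    by (rule indep_vars_compose2[OF ind]) auto
  have char_scaled: "char (distr M borel (\<lambda>\<omega>. w j * L j \<omega>)) \<theta> = char (distr M borel (L j)) (w j * \<theta>)"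
    if "j < n" for j
    using that by (simp add: char_def integral_distr mult.assoc mult.left_commute)
  have "char (distr M borel (\<lambda>\<omega>. (\<Sum>j<n. w j * L j \<omega>) + C)) \<theta>
      = (CLINT \<omega>|M. iexp (\<theta> * C) * iexp (\<theta> * (\<Sum>j<n. w j * L j \<omega>)))"
    by (simp add: char_def integral_distr distrib_left exp_add[symmetric] algebra_simps)
  also have "\<dots> = iexp (\<theta> * C) * char (distr M borel (\<lambda>\<omega>. \<Sum>j<n. w j * L j \<omega>)) \<theta>"
    by (simp add: char_def integral_distr)
  also have "char (distr M borel (\<lambda>\<omega>. \<Sum>j<n. w j * L j \<omega>)) \<theta>
      = (\<Prod>j<n. char (distr M borel (\<lambda>\<omega>. w j * L j \<omega>)) \<theta>)"
    by (rule char_distr_sum[OF ind_scaled])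
  finally show ?thesis
    using char_scaled by simp
qed

text \<open>The characteristic function of S(\<alpha>, \<beta>, \<sigma>, \<mu>) for \<alpha> \<noteq> 1, parametrised by \<open>s = \<sigma>^\<alpha>\<close>;
  in these coordinates independent sums add the parameters.\<close>
definition stable_cf_pow :: "real \<Rightarrow> real \<Rightarrow> real \<Rightarrow> real \<Rightarrow> real \<Rightarrow> complex" where
  "stable_cf_pow \<alpha> \<beta> s m \<theta> = exp (\<i> * complex_of_real (\<theta> * m)
     - complex_of_real (s * \<bar>\<theta>\<bar> powr \<alpha>) * (1 - \<i> * complex_of_real (\<beta> * sgn \<theta> * tan (pi * \<alpha> / 2))))"

lemma stable_cf_scaled:
  assumes "\<alpha> \<noteq> 1" "0 < \<sigma>" "0 < w"
  shows "stable_cf \<alpha> \<beta> \<sigma> \<mu> (w * \<theta>) = stable_cf_pow \<alpha> \<beta> (\<sigma> powr \<alpha> * w powr \<alpha>) (w * \<mu>) \<theta>"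
proof -
  have "\<bar>\<sigma> * (w * \<theta>)\<bar> powr \<alpha> = \<sigma> powr \<alpha> * w powr \<alpha> * \<bar>\<theta>\<bar> powr \<alpha>"
    using assms by (simp add: abs_mult powr_mult)
  moreover have "sgn (w * \<theta>) = sgn \<theta>"
    using assms by (simp add: sgn_mult)
  ultimately show ?thesis
    using assms unfolding stable_cf_def stable_cf_pow_def by (simp add: algebra_simps)
qed

lemma stable_cf_eq_pow:
  assumes "\<alpha> \<noteq> 1" "0 < \<sigma>"
  shows "stable_cf \<alpha> \<beta> \<sigma> \<mu> \<theta> = stable_cf_pow \<alpha> \<beta> (\<sigma> powr \<alpha>) \<mu> \<theta>"
  using stable_cf_scaled[OF assms zero_less_one, of \<beta> \<mu> \<theta>] by simp

lemma prod_stable_cf_pow: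
  "(\<Prod>j\<in>A. stable_cf_pow \<alpha> \<beta> (s j) (m j) \<theta>) = stable_cf_pow \<alpha> \<beta> (\<Sum>j\<in>A. s j) (\<Sum>j\<in>A. m j) \<theta>"
  by (induct A rule: infinite_finite_induct)
    (auto simp: stable_cf_pow_def exp_add[symmetric] algebra_simps)

lemma iexp_mult_stable_cf_pow:
  "iexp (\<theta> * C) * stable_cf_pow \<alpha> \<beta> s m \<theta> = stable_cf_pow \<alpha> \<beta> s (m + C) \<theta>"
  unfolding stable_cf_pow_def by (simp add: exp_add[symmetric] algebra_simps)

lemma norm_stable_cf: "norm (stable_cf \<alpha> \<beta> \<sigma> \<mu> \<theta>) = exp (- (\<bar>\<sigma> * \<theta>\<bar> powr \<alpha>))"
  unfolding stable_cf_def by (auto simp: powr_one_gt_zero_iff)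

lemma stable_cf_eq_imp_scale_eq:
  assumes "0 < \<alpha>" "0 < \<sigma>" "0 < \<sigma>'"
    and eq: "\<And>\<theta>. stable_cf \<alpha> \<beta> \<sigma> \<mu> \<theta> = stable_cf \<alpha>' \<beta>' \<sigma>' \<mu>' \<theta>"
  shows "\<alpha>' = \<alpha>" "\<sigma>' = \<sigma>"
proof -
  have abs_eq: "\<bar>\<sigma> * \<theta>\<bar> powr \<alpha> = \<bar>\<sigma>' * \<theta>\<bar> powr \<alpha>'" for \<theta>
    using arg_cong[OF eq[of \<theta>], of norm] by (simp add: norm_stable_cf)
  have at1: "\<sigma> powr \<alpha> = \<sigma>' powr \<alpha>'"
    using abs_eq[of 1] assms by simp
  have "2 powr \<alpha> * \<sigma> powr \<alpha> = 2 powr \<alpha>' * \<sigma>' powr \<alpha>'"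
    using abs_eq[of 2] assms by (simp add: abs_mult powr_mult mult.commute)
  then have "2 powr \<alpha> = (2::real) powr \<alpha>'"
    using at1 assms by simp
  then show \<alpha>: "\<alpha>' = \<alpha>"
    by (simp add: powr_inj)
  have "(\<sigma> powr \<alpha>) powr (1/\<alpha>) = (\<sigma>' powr \<alpha>) powr (1/\<alpha>)"
    using at1 \<alpha> by simp
  then show "\<sigma>' = \<sigma>"
    using assms by (simp add: powr_powr)
qed

lemma linear_plus_powr_in_2pi_Ints_imp_zero:
  fixes d c \<alpha> :: real
  assumes "0 < \<alpha>" "\<alpha> \<noteq> 1"
    and in_Ints: "\<And>\<theta>. 0 < \<theta> \<Longrightarrow> \<exists>n::int. \<theta> * d + \<theta> powr \<alpha> * c = of_int (2 * n) * pi"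
  shows "d = 0" "c = 0"
proof -
  define g where "g \<theta> = \<theta> * d + \<theta> powr \<alpha> * c" for \<theta>
  have "(g \<longlongrightarrow> 0 * d + 0 * c) (at_right 0)"
    unfolding g_def
    by (intro tendsto_intros tendsto_zero_powrI)
      (auto simp: assms intro: eventually_mono[OF eventually_at_right_less])
  then have "\<forall>\<^sub>F \<theta> in at_right 0. dist (g \<theta>) 0 < pi"
    by (simp add: tendsto_iff)
  \<comment> \<open>Near 0 the values of \<open>g\<close> are small multiples of \<open>2\<pi>\<close>, hence 0.\<close>
  then have "\<forall>\<^sub>F \<theta> in at_right 0. g \<theta> = 0"
    using eventually_at_right_less[of "0::real"]
  proof eventually_elim
    case (elim \<theta>)
    then obtain n :: int where n: "g \<theta> = of_int (2 * n) * pi"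
      using in_Ints unfolding g_def by auto
    then have "\<bar>real_of_int (2 * n)\<bar> < 1"
      using elim by (simp add: abs_mult)
    then show "g \<theta> = 0"
      using n by simp
  qed
  then obtain b where b: "b > 0" "\<And>\<theta>. 0 < \<theta> \<Longrightarrow> \<theta> < b \<Longrightarrow> g \<theta> = 0"
    unfolding eventually_at_right_field by auto
  define t where "t = b / 4"
  have t: "0 < t" "2 * t < b"
    using b by (auto simp: t_def)
  have g1: "t * d + t powr \<alpha> * c = 0"
    using b(2)[of t] t by (simp add: g_def)
  have g2: "2 * t * d + 2 powr \<alpha> * t powr \<alpha> * c = 0"
    using b(2)[of "2 * t"] t by (simp add: g_def powr_mult)
  \<comment> \<open>Comparing \<open>g t\<close> with \<open>g (2 t)\<close> separates the two homogeneities 1 and \<alpha>.\<close>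
  have "t powr \<alpha> * c * (2 powr \<alpha> - 2) = 0"
    using g1 g2 by algebra
  moreover have "2 powr \<alpha> \<noteq> (2::real)"
    using assms powr_inj[of 2 \<alpha> 1] by auto
  ultimately show "c = 0"
    using t by simp
  then show "d = 0"
    using g1 t by simp
qed

lemma stable_cf_eq_imp_location_eq:
  assumes "\<alpha> \<noteq> 1" "0 < \<alpha>" "0 < \<sigma>" "0 < \<sigma>'"
    and eq: "\<And>\<theta>. stable_cf \<alpha> \<beta> \<sigma> \<mu> \<theta> = stable_cf \<alpha>' \<beta>' \<sigma>' \<mu>' \<theta>"
  shows "\<mu>' = \<mu>"
proof -
  note same = stable_cf_eq_imp_scale_eq[OF assms(2-4) eq]
  define K where "K = \<sigma> powr \<alpha>"
  have phase: "\<exists>n::int. \<theta> * (\<mu> - \<mu>') + \<theta> powr \<alpha> * (K * (\<beta> - \<beta>') * tan (pi * \<alpha> / 2))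
      = of_int (2 * n) * pi" if "0 < \<theta>" for \<theta>
  proof -
    define e where "e b m = \<i> * complex_of_real (\<theta> * m)
      - complex_of_real (K * \<theta> powr \<alpha>) * (1 - \<i> * complex_of_real (b * tan (pi * \<alpha> / 2)))" for b m
    have "exp (e \<beta> \<mu>) = exp (e \<beta>' \<mu>')"
      using eq[of \<theta>] stable_cf_eq_pow[OF assms(1,3)] stable_cf_eq_pow[OF assms(1,4)] same that
      unfolding K_def e_def stable_cf_pow_def by (simp add: abs_of_pos)
    then have "exp (e \<beta> \<mu> - e \<beta>' \<mu>') = 1"
      by (simp add: exp_diff)
    moreover have "e \<beta> \<mu> - e \<beta>' \<mu>'
        = \<i> * complex_of_real (\<theta> * (\<mu> - \<mu>') + \<theta> powr \<alpha> * (K * (\<beta> - \<beta>') * tan (pi * \<alpha> / 2)))"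
      unfolding e_def by (simp add: algebra_simps)
    ultimately show ?thesis
      unfolding exp_eq_1 by (simp add: algebra_simps)
  qed
  show ?thesis
    using linear_plus_powr_in_2pi_Ints_imp_zero(1)[OF assms(2,1) phase] by simp
qed

lemma stable_location_eqI:
  assumes "has_stable_law M Z \<alpha> \<beta> \<sigma> \<mu>" "\<alpha> \<noteq> 1"
    "0 < \<alpha>" "\<alpha> \<le> 2" "-1 \<le> \<beta>" "\<beta> \<le> 1" "0 < \<sigma>"
  shows "stable_location M Z = \<mu>"
  unfolding stable_location_def
proof (rule the_equality)
  fix \<mu>' assume "\<exists>\<alpha>' \<beta>' \<sigma>'. 0 < \<alpha>' \<and> \<alpha>' \<le> 2 \<and> - 1 \<le> \<beta>' \<and> \<beta>' \<le> 1 \<and> 0 < \<sigma>'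
    \<and> has_stable_law M Z \<alpha>' \<beta>' \<sigma>' \<mu>'"
  then obtain \<alpha>' \<beta>' \<sigma>' where "0 < \<sigma>'" "has_stable_law M Z \<alpha>' \<beta>' \<sigma>' \<mu>'"
    by blast
  with assms show "\<mu>' = \<mu>"
    unfolding has_stable_law_def by (metis stable_cf_eq_imp_location_eq)
qed (use assms in blast)

lemma has_stable_law_affine_sum:
  fixes L :: "nat \<Rightarrow> 'a \<Rightarrow> real"
  assumes "prob_space M" "\<alpha> \<noteq> 1" "0 < \<alpha>" "0 < \<sigma>" "0 < n"
    and ind: "prob_space.indep_vars M (\<lambda>_. borel) L {..<n}"
    and law: "\<And>j. j < n \<Longrightarrow> has_stable_law M (L j) \<alpha> \<beta> \<sigma> \<mu>"
    and w: "\<And>j. j < n \<Longrightarrow> 0 < w j"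
    and f: "\<And>\<omega>. \<omega> \<in> space M \<Longrightarrow> f \<omega> = (\<Sum>j<n. w j * L j \<omega>) + C"
  shows "has_stable_law M f \<alpha> \<beta> ((\<sigma> powr \<alpha> * (\<Sum>j<n. w j powr \<alpha>)) powr (1/\<alpha>)) (\<mu> * (\<Sum>j<n. w j) + C)"
proof -
  have [measurable]: "\<And>j. j < n \<Longrightarrow> L j \<in> borel_measurable M"
    using law unfolding has_stable_law_def by auto
  have f_meas: "f \<in> borel_measurable M"
    by (subst measurable_cong[OF f]) auto
  have distr_f: "distr M borel f = distr M borel (\<lambda>\<omega>. (\<Sum>j<n. w j * L j \<omega>) + C)"
    by (rule distr_cong) (auto simp: f)
  have "0 < w j powr \<alpha>" if "j < n" for j
    using w[OF that] by simp
  then have "0 < (\<Sum>j<n. w j powr \<alpha>)"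
    using \<open>0 < n\<close> by (intro sum_pos) auto
  then have s_pow: "((\<sigma> powr \<alpha> * (\<Sum>j<n. w j powr \<alpha>)) powr (1/\<alpha>)) powr \<alpha> = \<sigma> powr \<alpha> * (\<Sum>j<n. w j powr \<alpha>)"
    "0 < (\<sigma> powr \<alpha> * (\<Sum>j<n. w j powr \<alpha>)) powr (1/\<alpha>)"
    using assms by (simp_all add: powr_powr)
  have "char (distr M borel f) \<theta>
      = stable_cf \<alpha> \<beta> ((\<sigma> powr \<alpha> * (\<Sum>j<n. w j powr \<alpha>)) powr (1/\<alpha>)) (\<mu> * (\<Sum>j<n. w j) + C) \<theta>" for \<theta>
  proof -
    have "char (distr M borel f) \<theta> = iexp (\<theta> * C) * (\<Prod>j<n. char (distr M borel (L j)) (w j * \<theta>))"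
      unfolding distr_f by (rule prob_space.char_distr_affine_sum[OF \<open>prob_space M\<close> ind])
    also have "(\<Prod>j<n. char (distr M borel (L j)) (w j * \<theta>))
        = (\<Prod>j<n. stable_cf_pow \<alpha> \<beta> (\<sigma> powr \<alpha> * w j powr \<alpha>) (w j * \<mu>) \<theta>)"
      using law w assms by (intro prod.cong refl) (simp add: has_stable_law_def stable_cf_scaled)
    also have "iexp (\<theta> * C) * \<dots>
        = stable_cf_pow \<alpha> \<beta> (\<Sum>j<n. \<sigma> powr \<alpha> * w j powr \<alpha>) ((\<Sum>j<n. w j * \<mu>) + C) \<theta>"
      unfolding prod_stable_cf_pow by (rule iexp_mult_stable_cf_pow)
    finally show ?thesis
      using stable_cf_eq_pow[OF \<open>\<alpha> \<noteq> 1\<close> s_pow(2)] s_pow(1)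
      by (simp add: sum_distrib_left mult.commute)
  qed
  with f_meas show ?thesis
    unfolding has_stable_law_def by simp
qed

lemma has_stable_law_cong:
  assumes "\<And>\<omega>. \<omega> \<in> space M \<Longrightarrow> f \<omega> = g \<omega>"
  shows "has_stable_law M f \<alpha> \<beta> \<sigma> \<mu> \<longleftrightarrow> has_stable_law M g \<alpha> \<beta> \<sigma> \<mu>"
proof -
  have "distr M borel f = distr M borel g"
    by (rule distr_cong) (auto simp: assms)
  moreover have "f \<in> borel_measurable M \<longleftrightarrow> g \<in> borel_measurable M"
    by (rule measurable_cong) (simp add: assms)
  ultimately show ?thesis
    unfolding has_stable_law_def by simp
qed

lemma weighted_am_gm_powr_le:
  fixes a c z :: real
  assumes "0 < a" "0 < c" "0 < z"
  shows "(a + c) * (z / a) powr (a / (a + c)) \<le> z + c"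
proof -
  define b where "b = a / (a + c)"
  have b: "0 \<le> b" "b \<le> 1" "(a + c) * b = a"
    using assms by (auto simp: b_def)
  have "(z / a) powr b * 1 powr (1 - b) \<le> b * (z / a) + (1 - b) * 1"
    by (rule Youngs_inequality_0) (use b assms in auto)
  then have "(a + c) * (z / a) powr b \<le> (a + c) * (b * (z / a) + (1 - b))"
    using assms by (intro mult_left_mono) auto
  also have "\<dots> = ((a + c) * b) * (z / a) + ((a + c) - (a + c) * b)"
    by (simp only: distrib_left right_diff_distrib mult_1_right mult.assoc)
  also have "\<dots> = z + c"
    using b(3) assms by simp
  finally show ?thesis
    by (simp add: b_def)
qed

lemma exp_mult_diff_ratio_nonneg:
  fixes \<mu> x y z v :: real
  assumes "y \<le> x" "v \<le> z"
  shows "0 \<le> (exp (\<mu> * x) - exp (\<mu> * y)) / (exp (\<mu> * z) - exp (\<mu> * v))"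
proof (cases "0 \<le> \<mu>")
  case True
  with assms show ?thesis
    by (intro divide_nonneg_nonneg) (auto intro: mult_left_mono)
next
  case False
  with assms show ?thesis
    by (intro divide_nonpos_nonpos) (auto intro: mult_left_mono_neg)
qed

definition lb_location :: "real \<Rightarrow> nat \<Rightarrow> real" where
  "lb_location \<mu> n = \<mu> + ln ((exp (\<mu> * real n) - 1) / (exp \<mu> - 1))"

definition lb_scale_factor :: "real \<Rightarrow> real \<Rightarrow> nat \<Rightarrow> real" where
  "lb_scale_factor \<alpha> \<mu> n =
     1 + (\<Sum>j=1..n-1. (1 - (exp (\<mu> * real j) - 1) / (exp (\<mu> * real n) - 1)) powr \<alpha>)"

lemma exp_lb_location:
  assumes "\<mu> \<noteq> 0" "1 \<le> n"
  shows "exp (lb_location \<mu> n) = exp \<mu> * (exp (\<mu> * real n) - 1) / (exp \<mu> - 1)"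
proof -
  have "0 \<le> (exp (\<mu> * real n) - exp (\<mu> * 0)) / (exp (\<mu> * 1) - exp (\<mu> * 0))"
    using assms by (intro exp_mult_diff_ratio_nonneg) auto
  moreover have "exp (\<mu> * real n) \<noteq> 1"
    using assms by simp
  ultimately have "0 < (exp (\<mu> * real n) - 1) / (exp \<mu> - 1)"
    using assms by (simp add: order_less_le)
  then show ?thesis
    unfolding lb_location_def by (simp add: exp_add)
qed

lemma exp_lb_location_add_one:
  assumes "\<mu> \<noteq> 0" "1 \<le> n"
  shows "exp (lb_location \<mu> n) + 1 = (exp (\<mu> * real (Suc n)) - 1) / (exp \<mu> - 1)"
proof -
  have "exp \<mu> - 1 \<noteq> 0"
    using assms by simp
  then have "exp (lb_location \<mu> n) + 1 = (exp \<mu> * (exp (\<mu> * real n) - 1) + (exp \<mu> - 1)) / (exp \<mu> - 1)"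
    by (simp add: exp_lb_location[OF assms] field_simps)
  also have "exp \<mu> * (exp (\<mu> * real n) - 1) + (exp \<mu> - 1) = exp (\<mu> * real (Suc n)) - 1"
    by (simp add: distrib_left exp_add algebra_simps)
  finally show ?thesis .
qed

lemma lb_location_Suc:
  assumes "\<mu> \<noteq> 0" "1 \<le> n"
  shows "lb_location \<mu> (Suc n) = \<mu> + ln (exp (lb_location \<mu> n) + 1)"
  using exp_lb_location_add_one[OF assms] by (simp add: lb_location_def)

lemma lb_scale_factor_eq_sum:
  assumes "\<mu> \<noteq> 0" "1 \<le> n"
  shows "lb_scale_factor \<alpha> \<mu> n
    = (\<Sum>j<n. ((exp (\<mu> * real n) - exp (\<mu> * real j)) / (exp (\<mu> * real n) - 1)) powr \<alpha>)"
proof -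
  have exp_ne: "exp (\<mu> * real n) \<noteq> 1"
    using assms by simp
  then have "1 - (exp (\<mu> * real j) - 1) / (exp (\<mu> * real n) - 1)
      = (exp (\<mu> * real n) - exp (\<mu> * real j)) / (exp (\<mu> * real n) - 1)" for j
    by (simp add: field_simps)
  moreover obtain m where "n = Suc m"
    using assms by (cases n) auto
  ultimately show ?thesis
    using exp_ne unfolding lb_scale_factor_def
    by (simp add: sum.lessThan_Suc_shift sum.atLeast1_atMost_eq del: of_nat_Suc sum.lessThan_Suc)
qed

lemma lb_scale_factor_Suc:
  assumes "\<mu> \<noteq> 0" "1 \<le> n"
  defines "b \<equiv> exp (lb_location \<mu> n) / (exp (lb_location \<mu> n) + 1)"
  shows "lb_scale_factor \<alpha> \<mu> (Suc n) = 1 + b powr \<alpha> * lb_scale_factor \<alpha> \<mu> n"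
proof -
  define u where "u j = exp (\<mu> * real j)" for j
  define r where "r m j = (u m - u j) / (u m - 1)" for m j
  have u_Suc: "u (Suc j) = exp \<mu> * u j" for j
    by (simp add: u_def distrib_left exp_add mult.commute)
  have "exp \<mu> \<noteq> 1" "u n \<noteq> 1" "u (Suc n) \<noteq> 1"
    using assms by (simp_all add: u_def del: of_nat_Suc)
  have "b = (exp \<mu> * (u n - 1) / (exp \<mu> - 1)) / ((u (Suc n) - 1) / (exp \<mu> - 1))"
    unfolding b_def u_def exp_lb_location_add_one[OF assms(1,2)] by (simp only: exp_lb_location[OF assms(1,2)])
  then have b_eq: "b = exp \<mu> * (u n - 1) / (u (Suc n) - 1)"
    using \<open>exp \<mu> \<noteq> 1\<close> by simp
  \<comment> \<open>Multiplying by \<open>b\<close> shifts the summation index, which is the whole recursion.\<close>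
  have shift: "b * r n j = r (Suc n) (Suc j)" for j
  proof -
    have "b * r n j = ((u n - 1) * (exp \<mu> * (u n - u j))) / ((u n - 1) * (exp \<mu> * u n - 1))"
      unfolding b_eq r_def u_Suc by (simp add: times_divide_times_eq ac_simps)
    also have "\<dots> = exp \<mu> * (u n - u j) / (exp \<mu> * u n - 1)"
      using \<open>u n \<noteq> 1\<close> by simp
    finally show ?thesis
      unfolding r_def u_Suc by (simp add: right_diff_distrib)
  qed
  have nonneg: "0 \<le> b" "j \<le> n \<Longrightarrow> 0 \<le> r n j" for j
    unfolding b_def r_def u_def
    by (simp_all add: add_pos_pos less_imp_le exp_mult_diff_ratio_nonneg[where v = 0, simplified])
  have "b powr \<alpha> * lb_scale_factor \<alpha> \<mu> n = (\<Sum>j<n. b powr \<alpha> * r n j powr \<alpha>)"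
    by (simp add: lb_scale_factor_eq_sum[OF assms(1,2)] sum_distrib_left r_def u_def)
  also have "\<dots> = (\<Sum>j<n. (b * r n j) powr \<alpha>)"
    by (intro sum.cong refl) (simp add: powr_mult nonneg)
  also have "\<dots> = (\<Sum>j<n. r (Suc n) (Suc j) powr \<alpha>)"
    by (simp add: shift)
  finally show ?thesis
    using lb_scale_factor_eq_sum[OF assms(1), of "Suc n" \<alpha>] \<open>u (Suc n) \<noteq> 1\<close>
    by (simp add: sum.lessThan_Suc_shift r_def u_def del: of_nat_Suc sum.lessThan_Suc)
qed

lemma Zw_pos_le_Yw:
  assumes X_pos: "\<And>k. 0 < X (t k) \<omega>" and c_pos: "\<And>k. 0 < c k" and a_pos: "\<And>k. 0 < a (Suc k)"
  shows "0 < Zw X t c a (Suc k) \<omega> \<and> Zw X t c a (Suc k) \<omega> \<le> Yw X t c (Suc k) \<omega>"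
proof (induction k)
  case 0
  show ?case
    using X_pos c_pos by (simp add: ret_def)
next
  case (Suc k)
  define r where "r = ret X t (Suc (Suc k)) \<omega>"
  define z where "z = Zw X t c a (Suc k) \<omega>"
  have "0 < r" "0 < z"
    using X_pos Suc.IH by (simp_all add: r_def z_def ret_def)
  have Z_eq: "Zw X t c a (Suc (Suc k)) \<omega>
      = r * ((a (Suc k) + c (Suc k)) * (z / a (Suc k)) powr (a (Suc k) / (a (Suc k) + c (Suc k))))"
    by (simp add: r_def z_def)
  have "0 < Zw X t c a (Suc (Suc k)) \<omega>"
    unfolding Z_eq using \<open>0 < r\<close> \<open>0 < z\<close> a_pos[of k] c_pos
    by (intro mult_pos_pos add_pos_pos) auto
  moreover have "Zw X t c a (Suc (Suc k)) \<omega> \<le> r * (z + c (Suc k))"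
    unfolding Z_eq using \<open>0 < r\<close> \<open>0 < z\<close> a_pos c_pos
    by (intro mult_left_mono weighted_am_gm_powr_le) auto
  moreover have "r * (z + c (Suc k)) \<le> Yw X t c (Suc (Suc k)) \<omega>"
    using Suc.IH \<open>0 < r\<close> by (simp add: r_def z_def)
  ultimately show ?case
    by linarith
qed

definition log_incr :: "(real \<Rightarrow> 'a \<Rightarrow> real) \<Rightarrow> nat \<Rightarrow> 'a \<Rightarrow> real" where
  "log_incr X j \<omega> = ln (X (real (Suc j)) \<omega>) - ln (X (real j) \<omega>)"

lemma ln_Zw_Suc_Suc:
  fixes k :: nat
  assumes X_pos: "\<And>k. 0 < X (real k) \<omega>" and a_pos: "\<And>k. 0 < a (Suc k)"
  defines "A \<equiv> a (Suc k)"
  shows "ln (Zw X real (\<lambda>_. 1) a (Suc (Suc k)) \<omega>)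
    = log_incr X (Suc k) \<omega> + ln (A + 1) + A / (A + 1) * (ln (Zw X real (\<lambda>_. 1) a (Suc k) \<omega>) - ln A)"
proof -
  have "0 < Zw X real (\<lambda>_. 1) a (Suc k) \<omega>"
    using Zw_pos_le_Yw[of X real \<omega> "\<lambda>_. 1" a k] X_pos a_pos by simp
  moreover have "0 < A"
    using a_pos by (simp add: A_def)
  ultimately show ?thesis
    using X_pos[of k] X_pos[of "Suc k"] X_pos[of "Suc (Suc k)"]
    by (simp add: A_def ret_def log_incr_def ln_mult ln_div add_pos_pos del: of_nat_Suc)
qed

locale regular_investing_stable =
  fixes M :: "'w measure" and X :: "real \<Rightarrow> 'w \<Rightarrow> real" and a :: "nat \<Rightarrow> real"
    and \<alpha> \<beta> \<sigma> \<mu> :: real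
  assumes prob: "prob_space M"
    and params: "0 < \<alpha>" "\<alpha> \<le> 2" "-1 \<le> \<beta>" "\<beta> \<le> 1" "0 < \<sigma>" "\<alpha> \<noteq> 1" "\<mu> \<noteq> 0"
    and pos: "\<And>t \<omega>. 0 \<le> t \<Longrightarrow> \<omega> \<in> space M \<Longrightarrow> 0 < X t \<omega>"
    and indep_incr: "\<And>(ts :: nat \<Rightarrow> real) n. 0 \<le> ts 0 \<Longrightarrow> strict_mono ts \<Longrightarrow>
         prob_space.indep_vars M (\<lambda>_. borel)
           (\<lambda>i \<omega>. ln (X (ts (Suc i)) \<omega>) - ln (X (ts i) \<omega>)) {..<n}"
    and stable_incr: "\<And>s t. 0 \<le> s \<Longrightarrow> s < t \<Longrightarrow>
         has_stable_law M (\<lambda>\<omega>. ln (X t \<omega> / X s \<omega>)) \<alpha> \<beta> (\<sigma> * (t - s) powr (1 / \<alpha>)) (\<mu> * (t - s))"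
    and a_rec: "\<And>k. 1 \<le> k \<Longrightarrow>
         a k = exp (stable_location M (\<lambda>\<omega>. ln (Zw X real (\<lambda>_. 1) a k \<omega>)))"
begin

lemma a_pos: "0 < a (Suc k)"
  using a_rec[of "Suc k"] by simp

lemma has_stable_law_log_incr_combination:
  assumes "0 < n" "\<And>j. j < n \<Longrightarrow> 0 < w j"
    and "\<And>\<omega>. \<omega> \<in> space M \<Longrightarrow> f \<omega> = (\<Sum>j<n. w j * log_incr X j \<omega>) + C"
  shows "has_stable_law M f \<alpha> \<beta> ((\<sigma> powr \<alpha> * (\<Sum>j<n. w j powr \<alpha>)) powr (1/\<alpha>)) (\<mu> * (\<Sum>j<n. w j) + C)"
proof (rule has_stable_law_affine_sum[OF prob params(6,1,5) assms(1) _ _ assms(2,3)])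
  show "prob_space.indep_vars M (\<lambda>_. borel) (log_incr X) {..<n}"
    using indep_incr[of real n] unfolding log_incr_def[abs_def] by (simp add: strict_mono_def)
  fix j
  have "has_stable_law M (\<lambda>\<omega>. ln (X (real (Suc j)) \<omega> / X (real j) \<omega>)) \<alpha> \<beta> \<sigma> \<mu>"
    using stable_incr[of "real j" "real (Suc j)"] by simp
  moreover have "ln (X (real (Suc j)) \<omega> / X (real j) \<omega>) = log_incr X j \<omega>" if "\<omega> \<in> space M" for \<omega>
    using pos[OF _ that, of "real j"] pos[OF _ that, of "real (Suc j)"]
    by (simp add: log_incr_def ln_div del: of_nat_Suc)
  ultimately show "has_stable_law M (log_incr X j) \<alpha> \<beta> \<sigma> \<mu>"
    using has_stable_law_cong[of M "\<lambda>\<omega>. ln (X (real (Suc j)) \<omega> / X (real j) \<omega>)" "log_incr X j"]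
    by simp
qed

lemma a_Suc_eq_exp_location:
  assumes w: "\<forall>j<Suc k. 0 < w j"
    and repr: "\<forall>\<omega>\<in>space M. ln (Zw X real (\<lambda>_. 1) a (Suc k) \<omega>) = (\<Sum>j<Suc k. w j * log_incr X j \<omega>) + C"
  shows "a (Suc k) = exp (\<mu> * (\<Sum>j<Suc k. w j) + C)"
proof -
  have "has_stable_law M (\<lambda>\<omega>. ln (Zw X real (\<lambda>_. 1) a (Suc k) \<omega>)) \<alpha> \<beta>
      ((\<sigma> powr \<alpha> * (\<Sum>j<Suc k. w j powr \<alpha>)) powr (1/\<alpha>)) (\<mu> * (\<Sum>j<Suc k. w j) + C)"
    by (rule has_stable_law_log_incr_combination) (use w repr in auto)
  moreover have "0 < (\<Sum>j<Suc k. w j powr \<alpha>)"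
    using w by (intro sum_pos) auto
  ultimately have "stable_location M (\<lambda>\<omega>. ln (Zw X real (\<lambda>_. 1) a (Suc k) \<omega>)) = \<mu> * (\<Sum>j<Suc k. w j) + C"
    using params
    by (intro stable_location_eqI[where \<sigma> = "(\<sigma> powr \<alpha> * (\<Sum>j<Suc k. w j powr \<alpha>)) powr (1/\<alpha>)"]) auto
  then show ?thesis
    using a_rec[of "Suc k"] by simp
qed

lemma ln_Zw_log_incr_combination:
  "\<exists>w C. (\<forall>j<Suc k. 0 < w j)
     \<and> (\<forall>\<omega>\<in>space M. ln (Zw X real (\<lambda>_. 1) a (Suc k) \<omega>) = (\<Sum>j<Suc k. w j * log_incr X j \<omega>) + C)
     \<and> (\<Sum>j<Suc k. w j powr \<alpha>) = lb_scale_factor \<alpha> \<mu> (Suc k)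
     \<and> \<mu> * (\<Sum>j<Suc k. w j) + C = lb_location \<mu> (Suc k)"
proof (induction k)
  case 0
  have "ln (Zw X real (\<lambda>_. 1) a (Suc 0) \<omega>) = log_incr X 0 \<omega>" if "\<omega> \<in> space M" for \<omega>
    using pos[OF _ that, of 0] pos[OF _ that, of 1] by (simp add: ret_def log_incr_def ln_div)
  then show ?case
    by (intro exI[of _ "\<lambda>_. 1"] exI[of _ 0]) (simp add: lb_scale_factor_def lb_location_def)
next
  case (Suc k)
  then obtain w C where w: "\<forall>j<Suc k. 0 < w j"
    and repr: "\<forall>\<omega>\<in>space M. ln (Zw X real (\<lambda>_. 1) a (Suc k) \<omega>) = (\<Sum>j<Suc k. w j * log_incr X j \<omega>) + C"
    and scale: "(\<Sum>j<Suc k. w j powr \<alpha>) = lb_scale_factor \<alpha> \<mu> (Suc k)"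
    and loc: "\<mu> * (\<Sum>j<Suc k. w j) + C = lb_location \<mu> (Suc k)"
    by blast
  define m where "m = lb_location \<mu> (Suc k)"
  define b where "b = exp m / (exp m + 1)"
  define w' where "w' j = (if j < Suc k then b * w j else 1)" for j
  define C' where "C' = ln (exp m + 1) + b * (C - m)"
  have a_eq: "a (Suc k) = exp m"
    using a_Suc_eq_exp_location[OF w repr] loc by (simp add: m_def)
  have "0 < b"
    by (simp add: b_def add_pos_pos)
  have w'_sum: "(\<Sum>j<Suc k. w' j * g j) = b * (\<Sum>j<Suc k. w j * g j)" for g :: "nat \<Rightarrow> real"
    unfolding sum_distrib_left by (rule sum.cong) (auto simp: w'_def)
  have "ln (Zw X real (\<lambda>_. 1) a (Suc (Suc k)) \<omega>) = (\<Sum>j<Suc (Suc k). w' j * log_incr X j \<omega>) + C'"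
    if "\<omega> \<in> space M" for \<omega>
  proof -
    have "ln (Zw X real (\<lambda>_. 1) a (Suc (Suc k)) \<omega>)
        = log_incr X (Suc k) \<omega> + ln (exp m + 1) + b * (ln (Zw X real (\<lambda>_. 1) a (Suc k) \<omega>) - m)"
      using ln_Zw_Suc_Suc[of X \<omega> a k] pos that a_pos by (simp add: a_eq b_def)
    also have "\<dots> = (\<Sum>j<Suc (Suc k). w' j * log_incr X j \<omega>) + C'"
      using repr that unfolding sum.lessThan_Suc[of _ "Suc k"] w'_sum
      by (simp add: w'_def C'_def algebra_simps del: sum.lessThan_Suc)
    finally show ?thesis .
  qed
  moreover have w'_powr: "(\<Sum>j<Suc k. w' j powr \<alpha>) = b powr \<alpha> * (\<Sum>j<Suc k. w j powr \<alpha>)"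
    unfolding sum_distrib_left by (rule sum.cong) (use w \<open>0 < b\<close> in \<open>auto simp: w'_def powr_mult\<close>)
  moreover have "(\<Sum>j<Suc (Suc k). w' j powr \<alpha>) = lb_scale_factor \<alpha> \<mu> (Suc (Suc k))"
    using lb_scale_factor_Suc[OF params(7), of "Suc k" \<alpha>] scale
    unfolding sum.lessThan_Suc[of _ "Suc k"] w'_powr
    by (simp add: w'_def b_def m_def del: sum.lessThan_Suc)
  moreover have "\<mu> * (\<Sum>j<Suc (Suc k). w' j) + C' = lb_location \<mu> (Suc (Suc k))"
  proof -
    have "\<mu> * (\<Sum>j<Suc (Suc k). w' j) + C' = b * (\<mu> * (\<Sum>j<Suc k. w j) + C - m) + \<mu> + ln (exp m + 1)"
      using w'_sum[of "\<lambda>_. 1"] unfolding sum.lessThan_Suc[of _ "Suc k"]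
      by (simp add: w'_def C'_def algebra_simps del: sum.lessThan_Suc)
    also have "\<dots> = lb_location \<mu> (Suc (Suc k))"
      using loc lb_location_Suc[OF params(7), of "Suc k"] by (simp add: m_def)
    finally show ?thesis .
  qed
  moreover have "\<forall>j<Suc (Suc k). 0 < w' j"
    using w \<open>0 < b\<close> by (simp add: w'_def)
  ultimately show ?case
    by blast
qed

lemma has_stable_law_ln_Zw:
  "has_stable_law M (\<lambda>\<omega>. ln (Zw X real (\<lambda>_. 1) a (Suc k) \<omega>)) \<alpha> \<beta>
     ((\<sigma> powr \<alpha> * lb_scale_factor \<alpha> \<mu> (Suc k)) powr (1/\<alpha>)) (lb_location \<mu> (Suc k))"
proof -
  obtain w C where w: "\<forall>j<Suc k. 0 < w j"
    and repr: "\<forall>\<omega>\<in>space M. ln (Zw X real (\<lambda>_. 1) a (Suc k) \<omega>) = (\<Sum>j<Suc k. w j * log_incr X j \<omega>) + C"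
    and scale: "(\<Sum>j<Suc k. w j powr \<alpha>) = lb_scale_factor \<alpha> \<mu> (Suc k)"
    and loc: "\<mu> * (\<Sum>j<Suc k. w j) + C = lb_location \<mu> (Suc k)"
    using ln_Zw_log_incr_combination by blast
  have "has_stable_law M (\<lambda>\<omega>. ln (Zw X real (\<lambda>_. 1) a (Suc k) \<omega>)) \<alpha> \<beta>
      ((\<sigma> powr \<alpha> * (\<Sum>j<Suc k. w j powr \<alpha>)) powr (1/\<alpha>)) (\<mu> * (\<Sum>j<Suc k. w j) + C)"
    by (rule has_stable_law_log_incr_combination) (use w repr in auto)
  then show ?thesis
    unfolding scale loc .
qed

end

theorem theorem2:
  fixes M :: "'w measure" and X :: "real \<Rightarrow> 'w \<Rightarrow> real" and a :: "nat \<Rightarrow> real"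
    and \<alpha> \<beta> \<sigma> \<mu> :: real
  assumes "prob_space M"
    and "0 < \<alpha>" "\<alpha> \<le> 2" "-1 \<le> \<beta>" "\<beta> \<le> 1" "0 < \<sigma>"
    and "\<alpha> \<noteq> 1" "\<mu> \<noteq> 0"
    \<comment> \<open>X is a positive process and log X is a Levy process with stable increments\<close>
    and pos: "\<And>t \<omega>. 0 \<le> t \<Longrightarrow> \<omega> \<in> space M \<Longrightarrow> 0 < X t \<omega>"
    and meas: "\<And>t. 0 \<le> t \<Longrightarrow> X t \<in> borel_measurable M"
    and cadlag: "\<And>\<omega>. \<omega> \<in> space M \<Longrightarrow>
         (\<forall>t\<ge>0. continuous (at_right t) (\<lambda>s. ln (X s \<omega>))) \<and>
         (\<forall>t>0. \<exists>l. ((\<lambda>s. ln (X s \<omega>)) \<longlongrightarrow> l) (at_left t))"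
    and indep_incr: "\<And>(ts :: nat \<Rightarrow> real) n. 0 \<le> ts 0 \<Longrightarrow> strict_mono ts \<Longrightarrow>
         prob_space.indep_vars M (\<lambda>_. borel)
           (\<lambda>i \<omega>. ln (X (ts (Suc i)) \<omega>) - ln (X (ts i) \<omega>)) {..<n}"
    and stable_incr: "\<And>s t. 0 \<le> s \<Longrightarrow> s < t \<Longrightarrow>
         has_stable_law M (\<lambda>\<omega>. ln (X t \<omega> / X s \<omega>)) \<alpha> \<beta> (\<sigma> * (t - s) powr (1 / \<alpha>)) (\<mu> * (t - s))"
    \<comment> \<open>c_k = 1, t_k = k, and a_k = exp(location parameter of log Z_k), k >= 1\<close>
    and a_rec: "\<And>k. 1 \<le> k \<Longrightarrow>
         a k = exp (stable_location M (\<lambda>\<omega>. ln (Zw X real (\<lambda>_. 1) a k \<omega>)))"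
  shows "\<forall>k::nat\<ge>1.
     (AE \<omega> in M. Zw X real (\<lambda>_. 1) a k \<omega> \<le> Yw X real (\<lambda>_. 1) k \<omega>) \<and>
     has_stable_law M (\<lambda>\<omega>. ln (Zw X real (\<lambda>_. 1) a k \<omega>)) \<alpha> \<beta>
       ((\<sigma> powr \<alpha> * (1 + (\<Sum>j::nat=1..k-1.
            (1 - (exp (\<mu> * real j) - 1) / (exp (\<mu> * real k) - 1)) powr \<alpha>))) powr (1 / \<alpha>))
       (\<mu> + ln ((exp (\<mu> * real k) - 1) / (exp \<mu> - 1)))"
proof (intro allI impI)
  interpret regular_investing_stable M X a \<alpha> \<beta> \<sigma> \<mu>
    using assms(1-8) pos indep_incr stable_incr a_rec by (rule regular_investing_stable.intro)
  fix k :: nat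
  assume "1 \<le> k"
  then obtain n where k: "k = Suc n"
    by (cases k) auto
  have "AE \<omega> in M. Zw X real (\<lambda>_. 1) a k \<omega> \<le> Yw X real (\<lambda>_. 1) k \<omega>"
  proof (rule AE_I2)
    fix \<omega> assume "\<omega> \<in> space M"
    then have "0 < Zw X real (\<lambda>_. 1) a k \<omega> \<and> Zw X real (\<lambda>_. 1) a k \<omega> \<le> Yw X real (\<lambda>_. 1) k \<omega>"
      unfolding k by (intro Zw_pos_le_Yw) (simp_all add: pos a_pos)
    then show "Zw X real (\<lambda>_. 1) a k \<omega> \<le> Yw X real (\<lambda>_. 1) k \<omega>" ..
  qed
  with has_stable_law_ln_Zw[of n] show "(AE \<omega> in M. Zw X real (\<lambda>_. 1) a k \<omega> \<le> Yw X real (\<lambda>_. 1) k \<omega>) \<and>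
     has_stable_law M (\<lambda>\<omega>. ln (Zw X real (\<lambda>_. 1) a k \<omega>)) \<alpha> \<beta>
       ((\<sigma> powr \<alpha> * (1 + (\<Sum>j::nat=1..k-1.
            (1 - (exp (\<mu> * real j) - 1) / (exp (\<mu> * real k) - 1)) powr \<alpha>))) powr (1 / \<alpha>))
       (\<mu> + ln ((exp (\<mu> * real k) - 1) / (exp \<mu> - 1)))"
    unfolding k lb_scale_factor_def lb_location_def by simp
qed

end
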